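(* Let $G\subseteq\ell^2$ be a dense $G_\delta$ set and $f:G\to\{1,2\}^\omega$ a continuous function such that $y\notin\mathsf{HC}(f(y))$ for each $y\in G$, $\mathsf{HC}(f(y))\neq\emptyset$ for each $y\in G$, and for each nonempty open $U\subseteq\ell^2$ the image $f[U\cap G]$ contains at least two elements. Then there is a perfect set $P\subseteq G$ (a closed subset of $\ell^2$ with no isolated points) such that $x\notin\mathsf{HC}(f(x))$ for all $x\in P$, and $x\in\mathsf{HC}(f(y))$ for all distinct $x,y\in P$.
   Context: $\omega=\{0,1,2,\dots\}$; $\ell^2$ is the Hilbert space of square-summable real sequences indexed by $\omega$ with its norm topology; $\{1,2\}^\omega$ has the product topology. For $w\in\{1,2\}^\omega$, $B_w:\ell^2\to\ell^2$ is $B_w(x)(i)=w(i)\,x(i+1)$, and $\mathsf{HC}(w)$ is the set of $x\in\ell^2$ such that $\{B_w^k(x):k\in\omega\}$ is dense in $\ell^2$. *)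

theory Defs
  imports "HOL-Analysis.Analysis"
begin

typedef l2 = "{x::nat \<Rightarrow> real. summable (\<lambda>i. (x i)\<^sup>2)}"
  morphisms l2_seq Abs_l2
  by (rule exI[of _ "\<lambda>_. 0"]) simp

setup_lifting type_definition_l2

lemma summable_sq_add:
  fixes x y :: "nat \<Rightarrow> real"
  assumes "summable (\<lambda>i. (x i)\<^sup>2)" "summable (\<lambda>i. (y i)\<^sup>2)"
  shows "summable (\<lambda>i. (x i + y i)\<^sup>2)"
proof (rule summable_comparison_test')
  show "summable (\<lambda>i. 2 * (x i)\<^sup>2 + 2 * (y i)\<^sup>2)"
    using assms by (intro summable_add summable_mult) auto
  fix n
  have "(x n + y n)\<^sup>2 \<le> 2 * (x n)\<^sup>2 + 2 * (y n)\<^sup>2"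
    using sum_squares_ge_zero[of "x n - y n" 0] by (simp add: power2_eq_square algebra_simps)
  then show "norm ((x n + y n)\<^sup>2) \<le> 2 * (x n)\<^sup>2 + 2 * (y n)\<^sup>2" by simp
qed

lemma summable_sq_scale:
  fixes x :: "nat \<Rightarrow> real"
  assumes "summable (\<lambda>i. (x i)\<^sup>2)"
  shows "summable (\<lambda>i. (c * x i)\<^sup>2)"
  using summable_mult[OF assms, of "c\<^sup>2"] by (simp add: power_mult_distrib)

lemma sqrt_suminf_sq_triangle:
  fixes x y :: "nat \<Rightarrow> real"
  assumes sx: "summable (\<lambda>i. (x i)\<^sup>2)" and sy: "summable (\<lambda>i. (y i)\<^sup>2)"
  shows "sqrt (\<Sum>i. (x i + y i)\<^sup>2) \<le> sqrt (\<Sum>i. (x i)\<^sup>2) + sqrt (\<Sum>i. (y i)\<^sup>2)"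
proof -
  let ?a = "sqrt (\<Sum>i. (x i)\<^sup>2)" and ?b = "sqrt (\<Sum>i. (y i)\<^sup>2)"
  have "(\<Sum>i. (x i + y i)\<^sup>2) \<le> (?a + ?b)\<^sup>2"
  proof (rule suminf_le_const)
    show "summable (\<lambda>i. (x i + y i)\<^sup>2)" using summable_sq_add[OF sx sy] .
    fix n
    have "L2_set (\<lambda>i. x i + y i) {..<n} \<le> L2_set x {..<n} + L2_set y {..<n}"
      by (rule L2_set_triangle_ineq)
    also have "L2_set x {..<n} \<le> ?a"
      unfolding L2_set_def
      by (intro real_sqrt_le_mono sum_le_suminf sx) auto
    also have "L2_set y {..<n} \<le> ?b"
      unfolding L2_set_def
      by (intro real_sqrt_le_mono sum_le_suminf sy) auto
    finally have h: "L2_set (\<lambda>i. x i + y i) {..<n} \<le> ?a + ?b" by simp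
    have "(\<Sum>i<n. (x i + y i)\<^sup>2) = (L2_set (\<lambda>i. x i + y i) {..<n})\<^sup>2"
      unfolding L2_set_def by (simp add: sum_nonneg)
    also have "\<dots> \<le> (?a + ?b)\<^sup>2"
      using h by (intro power_mono) auto
    finally show "(\<Sum>i<n. (x i + y i)\<^sup>2) \<le> (?a + ?b)\<^sup>2" .
  qed
  then have "sqrt (\<Sum>i. (x i + y i)\<^sup>2) \<le> sqrt ((?a + ?b)\<^sup>2)"
    by (rule real_sqrt_le_mono)
  also have "\<dots> = ?a + ?b"
    by (intro real_sqrt_abs[THEN trans] abs_of_nonneg add_nonneg_nonneg real_sqrt_ge_zero suminf_nonneg sx sy) auto
  finally show ?thesis .
qed

lemma sqrt_suminf_sq_scale:
  fixes x :: "nat \<Rightarrow> real"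
  assumes sx: "summable (\<lambda>i. (x i)\<^sup>2)"
  shows "sqrt (\<Sum>i. (r * x i)\<^sup>2) = \<bar>r\<bar> * sqrt (\<Sum>i. (x i)\<^sup>2)"
proof -
  have "(\<Sum>i. (r * x i)\<^sup>2) = r\<^sup>2 * (\<Sum>i. (x i)\<^sup>2)"
    using suminf_mult[OF sx, of "r\<^sup>2"] by (simp add: power_mult_distrib)
  then show ?thesis
    by (metis real_sqrt_mult real_sqrt_abs)
qed

instantiation l2 :: real_normed_vector
begin

lift_definition zero_l2 :: l2 is "\<lambda>_. 0" by simp
lift_definition plus_l2 :: "l2 \<Rightarrow> l2 \<Rightarrow> l2" is "\<lambda>x y i. x i + y i"
  by (rule summable_sq_add)
lift_definition uminus_l2 :: "l2 \<Rightarrow> l2" is "\<lambda>x i. - x i" by simp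
lift_definition minus_l2 :: "l2 \<Rightarrow> l2 \<Rightarrow> l2" is "\<lambda>x y i. x i - y i"
  using summable_sq_add[of _ "\<lambda>i. - _ i"] by simp
lift_definition scaleR_l2 :: "real \<Rightarrow> l2 \<Rightarrow> l2" is "\<lambda>c x i. c * x i"
  by (rule summable_sq_scale)
lift_definition norm_l2 :: "l2 \<Rightarrow> real" is "\<lambda>x. sqrt (\<Sum>i. (x i)\<^sup>2)" .
definition sgn_l2 :: "l2 \<Rightarrow> l2" where "sgn_l2 x = scaleR (inverse (norm x)) x"
definition dist_l2 :: "l2 \<Rightarrow> l2 \<Rightarrow> real" where "dist_l2 x y = norm (x - y)"
definition uniformity_l2 :: "(l2 \<times> l2) filter"
  where "uniformity_l2 = (INF e\<in>{0<..}. principal {(x, y). dist x y < e})"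
definition open_l2 :: "l2 set \<Rightarrow> bool"
  where "open_l2 U = (\<forall>x\<in>U. \<forall>\<^sub>F (x', y) in uniformity. x' = x \<longrightarrow> y \<in> U)"

instance
proof
  fix a b c :: l2 and r s :: real
  show "a + b + c = a + (b + c)" by transfer (simp add: algebra_simps)
  show "a + b = b + a" by transfer (simp add: algebra_simps)
  show "0 + a = a" by transfer simp
  show "- a + a = 0" by transfer simp
  show "a - b = a + - b" by transfer simp
  show "r *\<^sub>R (a + b) = r *\<^sub>R a + r *\<^sub>R b" by transfer (simp add: algebra_simps)
  show "(r + s) *\<^sub>R a = r *\<^sub>R a + s *\<^sub>R a" by transfer (simp add: algebra_simps)
  show "r *\<^sub>R s *\<^sub>R a = (r * s) *\<^sub>R a" by transfer (simp add: algebra_simps)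
  show "1 *\<^sub>R a = a" by transfer simp
  show "sgn a = inverse (norm a) *\<^sub>R a" by (simp add: sgn_l2_def)
  show "dist a b = norm (a - b)" by (simp add: dist_l2_def)
  show "uniformity = (INF e\<in>{0<..}. principal {(x, y :: l2). dist x y < e})"
    by (simp add: uniformity_l2_def)
  show "open U = (\<forall>x\<in>U. \<forall>\<^sub>F (x', y) in uniformity. x' = x \<longrightarrow> y \<in> U)" for U :: "l2 set"
    by (simp add: open_l2_def)
  show "(norm a = 0) = (a = 0)"
  proof transfer
    fix x :: "nat \<Rightarrow> real" assume sx: "summable (\<lambda>i. (x i)\<^sup>2)"
    have "(sqrt (\<Sum>i. (x i)\<^sup>2) = 0) \<longleftrightarrow> (\<Sum>i. (x i)\<^sup>2) = 0" by simp
    also have "\<dots> \<longleftrightarrow> (\<forall>i. (x i)\<^sup>2 = 0)"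
      using suminf_eq_zero_iff[OF sx] by simp
    also have "\<dots> \<longleftrightarrow> x = (\<lambda>_. 0)" by (auto simp: fun_eq_iff)
    finally show "(sqrt (\<Sum>i. (x i)\<^sup>2) = 0) = (x = (\<lambda>_. 0))" .
  qed
  show "norm (a + b) \<le> norm a + norm b"
    by transfer (rule sqrt_suminf_sq_triangle)
  show "norm (r *\<^sub>R a) = \<bar>r\<bar> * norm a"
    by transfer (rule sqrt_suminf_sq_scale)
qed

end

text \<open>Weights are sequences w :: nat => real; the statement only uses weights with values in
  {1,2}, for which the weighted backward shift maps l2 into l2.\<close>

definition B :: "(nat \<Rightarrow> real) \<Rightarrow> l2 \<Rightarrow> l2" where
  "B w x = Abs_l2 (\<lambda>i. w i * l2_seq x (Suc i))"

definition HC :: "(nat \<Rightarrow> real) \<Rightarrow> l2 set" where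
  "HC w = {x. closure (range (\<lambda>k. (B w ^^ k) x)) = UNIV}"

definition perfect_set :: "'a::topological_space set \<Rightarrow> bool" where
  "perfect_set P \<longleftrightarrow> closed P \<and> (\<forall>x\<in>P. x islimpt P)"

end

theory Submission
  imports Defs
begin

text \<open>
  Let W_0, W_1, ... enumerate the balls with rational, finitely supported centres and radii
  1/(j+1), every ball occurring at arbitrarily large indices. Inside the open sets whose
  intersection is G we build a Cantor scheme of closed balls C_s, indexed by finite 0-1 words s,
  of radius at most 2^-|s|, such that whenever s and t are distinct words of length n, x lies in
  C_s and y in C_t and G, some iterate of B_(f y) maps x into W_n. One pair of balls is shrunk
  for one W_n at a time: take y0 in C_t and G, a hypercyclic vector x0 of B_(f y0) in C_s
  (hypercyclic vectors are dense once there is one) and k with B_(f y0)^k x0 in W_n. For x near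
  x0, B_w^k x stays close to B_(f y0)^k x0 as long as w agrees with f y0 on a long enough initial
  segment, and as f is continuous with values in {1,2}^omega this holds for all y near y0.
  Two distinct points x, y of the resulting perfect set lie in different balls at every level
  from some N on, so the B_(f y)-orbit of x meets W_n for all n >= N and is therefore dense.
\<close>

section \<open>Topological preliminaries and Cantor schemes\<close>

lemma closure_eq_UNIV_iff: "closure S = UNIV \<longleftrightarrow> (\<forall>U. open U \<longrightarrow> U \<noteq> {} \<longrightarrow> U \<inter> S \<noteq> {})"
proof
  assume "\<forall>U. open U \<longrightarrow> U \<noteq> {} \<longrightarrow> U \<inter> S \<noteq> {}"
  then have "- closure S = {}"
    using closure_subset[of S] by blast
  then show "closure S = UNIV"
    by blast
qed (use open_Int_closure_eq_empty in fastforce)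

lemma open_nonempty_infinite:
  fixes U :: "'a::{t1_space, perfect_space} set"
  assumes "open U" "U \<noteq> {}"
  shows "infinite U"
  using assms islimpt_eq_acc_point[of _ UNIV] islimpt_UNIV by blast

lemma disjoint_open_subsets:
  fixes U V :: "'a::{metric_space, perfect_space} set"
  assumes "open U" "U \<noteq> {}" "open V" "V \<noteq> {}"
  shows "\<exists>U'\<subseteq>U. \<exists>V'\<subseteq>V. open U' \<and> U' \<noteq> {} \<and> open V' \<and> V' \<noteq> {} \<and> U' \<inter> V' = {}"
proof -
  obtain y where "y \<in> V"
    using assms by blast
  have "U - {y} \<noteq> {}"
    using open_nonempty_infinite[OF assms(1,2)] finite_subset[of U "{y}"] by auto
  then obtain x where "x \<in> U" "x \<noteq> y"
    by blast
  define r where "r = dist x y / 2"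
  have "r > 0"
    using \<open>x \<noteq> y\<close> by (simp add: r_def)
  have "U \<inter> ball x r \<inter> (V \<inter> ball y r) = {}"
  proof -
    have False if "dist x z < r" "dist y z < r" for z
      using that dist_triangle2[of x y z] by (simp add: r_def)
    then show ?thesis
      by auto
  qed
  then show ?thesis
    using assms \<open>x \<in> U\<close> \<open>y \<in> V\<close> \<open>r > 0\<close>
    by (intro exI[of _ "U \<inter> ball x r"] conjI exI[of _ "V \<inter> ball y r"]) auto
qed

lemma open_contains_small_cball:
  fixes V :: "'a::metric_space set"
  assumes "open V" "V \<noteq> {}" "e > 0"
  shows "\<exists>c r. 0 < r \<and> r \<le> e \<and> cball c r \<subseteq> V"
proof -
  obtain c where "c \<in> V"
    using assms by blast
  then obtain r where "r > 0" "cball c r \<subseteq> V"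
    using assms(1) open_contains_cball by blast
  then show ?thesis
    using \<open>e > 0\<close> by (intro exI[of _ c] exI[of _ "min r e"]) auto
qed

text \<open>The ball with centre \<open>d i\<close> and radius \<open>1 / (j + 1)\<close> occurs at index
  \<open>prod_encode (to_nat i, j) \<ge> j\<close>, hence at arbitrarily large indices.\<close>

definition ball_seq :: "('i::countable \<Rightarrow> 'a::metric_space) \<Rightarrow> nat \<Rightarrow> 'a set" where
  "ball_seq d n = ball (d (from_nat (fst (prod_decode n)))) (inverse (real (Suc (snd (prod_decode n)))))"

lemma open_ball_seq: "open (ball_seq d n)"
  by (simp add: ball_seq_def)

lemma ball_seq_nonempty: "ball_seq d n \<noteq> {}"
  by (simp add: ball_seq_def)

lemma ball_seq_subset:
  fixes d :: "'i::countable \<Rightarrow> 'a::metric_space"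
  assumes "closure (range d) = UNIV" "open U" "x \<in> U"
  shows "\<exists>n\<ge>N. ball_seq d n \<subseteq> U"
proof -
  obtain e where "e > 0" "ball x e \<subseteq> U"
    using assms open_contains_ball by blast
  have "\<forall>\<^sub>F j in sequentially. N \<le> j \<and> inverse (real (Suc j)) < e/2"
    using eventually_ge_at_top order_tendstoD(2)[OF LIMSEQ_inverse_real_of_nat, of "e/2"] \<open>e > 0\<close>
    by (intro eventually_conj) auto
  then obtain j where "N \<le> j" "inverse (real (Suc j)) < e/2"
    by (auto simp: eventually_sequentially)
  moreover obtain i where "dist (d i) x < e/2"
    using assms(1) closure_approachable[of x "range d"] half_gt_zero[OF \<open>e > 0\<close>] by blast
  moreover have "ball (d i) (inverse (real (Suc j))) \<subseteq> ball x e"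
  proof
    fix y
    assume "y \<in> ball (d i) (inverse (real (Suc j)))"
    then show "y \<in> ball x e"
      using dist_triangle3[of x y "d i"] \<open>inverse (real (Suc j)) < e/2\<close> \<open>dist (d i) x < e/2\<close>
      by simp
  qed
  moreover have "ball_seq d (prod_encode (to_nat i, j)) = ball (d i) (inverse (real (Suc j)))"
    by (simp add: ball_seq_def)
  ultimately show ?thesis
    using \<open>ball x e \<subseteq> U\<close> le_prod_encode_2[of j "to_nat i"] by (metis order_trans)
qed

lemma continuous_on_Ints_locally_constant:
  fixes f :: "'a::metric_space \<Rightarrow> nat \<Rightarrow> real"
  assumes "continuous_on G f" and "\<And>y i. y \<in> G \<Longrightarrow> f y i \<in> \<int>" and "y0 \<in> G"
  shows "\<exists>\<delta>>0. \<forall>y\<in>G. dist y y0 < \<delta> \<longrightarrow> (\<forall>i<M. f y i = f y0 i)"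
proof -
  have "\<forall>\<^sub>F y in at y0 within G. \<forall>i\<in>{..<M}. dist (f y i) (f y0 i) < 1"
  proof (rule eventually_ball_finite)
    show "\<forall>i\<in>{..<M}. \<forall>\<^sub>F y in at y0 within G. dist (f y i) (f y0 i) < 1"
      using continuous_on_product_then_coordinatewise[OF assms(1)] assms(3)
      by (auto simp: continuous_on_def intro: tendstoD)
  qed simp
  then obtain \<delta> where "\<delta> > 0"
    and \<delta>: "\<And>y. y \<in> G \<Longrightarrow> y \<noteq> y0 \<Longrightarrow> dist y y0 < \<delta> \<Longrightarrow> \<forall>i<M. dist (f y i) (f y0 i) < 1"
    by (auto simp: eventually_at)
  have "f y i = f y0 i" if "y \<in> G" "dist y y0 < \<delta>" "i < M" for y i
    using \<delta>[OF that(1) _ that(2)] that Ints_eq_abs_less1[OF assms(2) assms(2)[OF assms(3)]]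
    by (cases "y = y0") (auto simp: dist_real_def)
  then show ?thesis
    using \<open>\<delta> > 0\<close> by blast
qed

lemma pairwise_refinement:
  assumes "finite I"
    and mono: "\<And>A B A' B'. R A B \<Longrightarrow> A' \<subseteq> A \<Longrightarrow> B' \<subseteq> B \<Longrightarrow> R A' B'"
    and refine: "\<And>A B. P A \<Longrightarrow> P B \<Longrightarrow> \<exists>A'\<subseteq>A. \<exists>B'\<subseteq>B. P A' \<and> P B' \<and> R A' B'"
    and "\<And>i. i \<in> I \<Longrightarrow> P (U i)"
  shows "\<exists>V. \<forall>i\<in>I. P (V i) \<and> V i \<subseteq> U i \<and> (\<forall>j\<in>I. i \<noteq> j \<longrightarrow> R (V i) (V j))"
proof -
  have "\<exists>V. \<forall>i\<in>I. P (V i) \<and> V i \<subseteq> U i \<and> (\<forall>j\<in>I. (i, j) \<in> Q \<longrightarrow> i \<noteq> j \<longrightarrow> R (V i) (V j))"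
    if "Q \<subseteq> I \<times> I" for Q
    using finite_subset[OF that finite_cartesian_product[OF assms(1) assms(1)]] that
  proof (induction Q rule: finite_induct)
    case empty
    show ?case
      using assms(4) by (intro exI[of _ U]) simp
  next
    case (insert p Q)
    obtain i j where p: "p = (i, j)" and "i \<in> I" "j \<in> I"
      using insert.prems by auto
    obtain V where V: "\<And>l. l \<in> I \<Longrightarrow> P (V l) \<and> V l \<subseteq> U l"
      and R_V: "\<And>l l'. l \<in> I \<Longrightarrow> l' \<in> I \<Longrightarrow> (l, l') \<in> Q \<Longrightarrow> l \<noteq> l' \<Longrightarrow> R (V l) (V l')"
      using insert.IH insert.prems by auto
    obtain A B where "A \<subseteq> V i" "B \<subseteq> V j" "P A" "P B" and "i \<noteq> j \<Longrightarrow> R A B"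
      using refine[of "V i" "V j"] V[OF \<open>i \<in> I\<close>] V[OF \<open>j \<in> I\<close>] by blast
    define V' where "V' = V(i := A, j := B)"
    have V'_sub: "V' l \<subseteq> V l" for l
      using \<open>A \<subseteq> V i\<close> \<open>B \<subseteq> V j\<close> by (simp add: V'_def)
    have "P (V' l) \<and> V' l \<subseteq> U l" if "l \<in> I" for l
      using V[OF that] V'_sub[of l] \<open>P A\<close> \<open>P B\<close> by (auto simp: V'_def)
    moreover have "R (V' l) (V' l')"
      if "l \<in> I" "l' \<in> I" "(l, l') \<in> insert p Q" "l \<noteq> l'" for l l'
    proof (cases "(l, l') = p")
      case True
      then show ?thesis
        using \<open>i \<noteq> j \<Longrightarrow> R A B\<close> p that(4) by (simp add: V'_def)
    next
      case False
      then have "R (V l) (V l')"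
        using R_V that by blast
      then show ?thesis
        using mono V'_sub by blast
    qed
    ultimately show ?case
      by (intro exI[of _ V']) blast
  qed
  from this[of "I \<times> I"] show ?thesis
    by auto
qed

locale cantor_scheme =
  fixes C :: "bool list \<Rightarrow> 'a::complete_space set" and d :: "nat \<Rightarrow> real"
  assumes closed_C: "closed (C s)"
    and C_nonempty: "C s \<noteq> {}"
    and C_append: "C (s @ [b]) \<subseteq> C s"
    and C_children_disjoint: "C (s @ [True]) \<inter> C (s @ [False]) = {}"
    and dist_le: "x \<in> C s \<Longrightarrow> y \<in> C s \<Longrightarrow> dist x y \<le> d (length s)"
    and d_tendsto: "d \<longlonglongrightarrow> 0"
begin

definition limit_set :: "'a set" where
  "limit_set = {x. \<forall>n. \<exists>s. length s = n \<and> x \<in> C s}"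

lemma limit_setD: "x \<in> limit_set \<Longrightarrow> \<exists>s. length s = n \<and> x \<in> C s"
  unfolding limit_set_def by blast

lemma eventually_d_less: "e > 0 \<Longrightarrow> \<exists>N. \<forall>n\<ge>N. d n < e"
  using order_tendstoD(2)[OF d_tendsto] by (auto simp: eventually_sequentially)

lemma C_prefix: "C (s @ t) \<subseteq> C s"
proof (induction t rule: rev_induct)
  case (snoc b t)
  then show ?case
    using C_append[of "s @ t" b] by simp
qed simp

lemma limit_set_meets: "\<exists>x\<in>limit_set. x \<in> C s"
proof -
  define \<sigma> where "\<sigma> i = (i < length s \<and> s ! i)" for i
  let ?S = "\<lambda>n. C (map \<sigma> [0..<n])"
  have "?S n \<subseteq> ?S m" if "m \<le> n" for m n
  proof -
    have "[0..<n] = [0..<m] @ [m..<n]"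
      using upt_add_eq_append[OF le0, of m "n - m"] that by simp
    then show ?thesis
      using C_prefix[of "map \<sigma> [0..<m]" "map \<sigma> [m..<n]"] by simp
  qed
  moreover have "\<exists>n. \<forall>x\<in>?S n. \<forall>y\<in>?S n. dist x y < e" if e: "e > 0" for e
  proof -
    obtain N where "d N < e"
      using eventually_d_less[OF e] by blast
    then have "\<forall>x\<in>?S N. \<forall>y\<in>?S N. dist x y < e"
      using dist_le[of _ "map \<sigma> [0..<N]"] by fastforce
    then show ?thesis ..
  qed
  ultimately obtain a where a: "\<And>n. a \<in> ?S n"
    using decreasing_closed_nest[of ?S] closed_C C_nonempty by blast
  have "map \<sigma> [0..<length s] = s"
    by (rule nth_equalityI) (simp_all add: \<sigma>_def)
  then have "a \<in> C s"
    using a[of "length s"] by simp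
  moreover have "a \<in> limit_set"
    unfolding limit_set_def
  proof (intro CollectI allI)
    show "\<exists>s. length s = n \<and> a \<in> C s" for n
      using a[of n] by (intro exI[of _ "map \<sigma> [0..<n]"]) simp
  qed
  ultimately show ?thesis
    by blast
qed

lemma closed_limit_set: "closed limit_set"
proof -
  have "limit_set = (\<Inter>n. \<Union>s\<in>{s. length s = n}. C s)"
    by (auto simp: limit_set_def)
  moreover have "finite {s :: bool list. length s = n}" for n
    using finite_lists_length_eq[of "UNIV :: bool set" n] by simp
  ultimately show ?thesis
    using closed_C by (simp add: closed_INT closed_UN)
qed

lemma distinct_points_separated:
  assumes "x \<noteq> y"
  shows "\<exists>N. \<forall>s. N \<le> length s \<longrightarrow> x \<in> C s \<longrightarrow> y \<notin> C s"
proof -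
  obtain N where "\<And>n. N \<le> n \<Longrightarrow> d n < dist x y"
    using eventually_d_less[of "dist x y"] assms by auto
  then show ?thesis
    using dist_le[of x _ y] by (meson not_le)
qed

lemma perfect_limit_set: "perfect_set limit_set"
  unfolding perfect_set_def
proof (intro conjI ballI closed_limit_set)
  fix x
  assume "x \<in> limit_set"
  show "x islimpt limit_set"
  proof (unfold islimpt_approachable, intro allI impI)
    fix e :: real
    assume "e > 0"
    then obtain N where "d N < e"
      using eventually_d_less by blast
    obtain s where "length s = Suc N" "x \<in> C s"
      using \<open>x \<in> limit_set\<close> by (auto simp: limit_set_def)
    define p b where "p = butlast s" and "b = last s"
    have s: "s = p @ [b]" and "length p = N"
      using \<open>length s = Suc N\<close> by (auto simp: p_def b_def intro!: append_butlast_last_id[symmetric])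
    obtain a where "a \<in> limit_set" "a \<in> C (p @ [\<not> b])"
      using limit_set_meets by blast
    moreover have "a \<noteq> x"
      using C_children_disjoint[of p] \<open>a \<in> C (p @ [\<not> b])\<close> \<open>x \<in> C s\<close> s by (cases b) auto
    moreover have "a \<in> C p" "x \<in> C p"
      using C_append \<open>a \<in> C (p @ [\<not> b])\<close> \<open>x \<in> C s\<close> s by blast+
    then have "dist a x < e"
      using dist_le[of a p x] \<open>length p = N\<close> \<open>d N < e\<close> by simp
    ultimately show "\<exists>a\<in>limit_set. a \<noteq> x \<and> dist a x < e"
      by blast
  qed
qed

end

section \<open>The space \<open>l2\<close>\<close>

lemma summable_l2_seq: "summable (\<lambda>i. (l2_seq x i)\<^sup>2)"
  using l2_seq by simp

lemma l2_seq_Abs_l2: "summable (\<lambda>i. (z i)\<^sup>2) \<Longrightarrow> l2_seq (Abs_l2 z) = z"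
  by (simp add: Abs_l2_inverse)

lemma l2_seq_zero [simp]: "l2_seq 0 i = 0"
  by (simp add: zero_l2.rep_eq)

lemma l2_seq_add [simp]: "l2_seq (x + y) i = l2_seq x i + l2_seq y i"
  by (simp add: plus_l2.rep_eq)

lemma l2_seq_diff [simp]: "l2_seq (x - y) i = l2_seq x i - l2_seq y i"
  by (simp add: minus_l2.rep_eq)

lemma l2_seq_scaleR [simp]: "l2_seq (c *\<^sub>R x) i = c * l2_seq x i"
  by (simp add: scaleR_l2.rep_eq)

lemma l2_eqI: "(\<And>i. l2_seq x i = l2_seq y i) \<Longrightarrow> x = y"
  by (simp add: l2_seq_inject[symmetric] fun_eq_iff)

lemma power2_norm_l2: "(norm x)\<^sup>2 = (\<Sum>i. (l2_seq x i)\<^sup>2)"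
  by (simp add: norm_l2.rep_eq suminf_nonneg summable_l2_seq)

lemma norm_l2_le_iff:
  assumes "0 \<le> e"
  shows "norm x \<le> e \<longleftrightarrow> (\<forall>M. (\<Sum>i<M. (l2_seq x i)\<^sup>2) \<le> e\<^sup>2)"
proof -
  have "norm x \<le> e \<longleftrightarrow> (\<Sum>i. (l2_seq x i)\<^sup>2) \<le> e\<^sup>2"
    using assms by (simp flip: power2_norm_l2 add: abs_le_square_iff[symmetric])
  also have "\<dots> \<longleftrightarrow> (\<forall>M. (\<Sum>i<M. (l2_seq x i)\<^sup>2) \<le> e\<^sup>2)"
  proof
    show "(\<Sum>i. (l2_seq x i)\<^sup>2) \<le> e\<^sup>2 \<Longrightarrow> \<forall>M. (\<Sum>i<M. (l2_seq x i)\<^sup>2) \<le> e\<^sup>2"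
      using sum_le_suminf[OF summable_l2_seq, of "{..<_}" x] order_trans by fastforce
  qed (simp add: suminf_le_const summable_l2_seq)
  finally show ?thesis .
qed

lemma sum_power2_l2_seq_le: "(\<Sum>i<M. (l2_seq x i)\<^sup>2) \<le> (norm x)\<^sup>2"
  using norm_l2_le_iff[of "norm x" x] by simp

lemma abs_l2_seq_le_norm: "\<bar>l2_seq x i\<bar> \<le> norm x"
proof -
  have "(l2_seq x i)\<^sup>2 \<le> (\<Sum>j<Suc i. (l2_seq x j)\<^sup>2)"
    by (simp add: sum_nonneg)
  also have "\<dots> \<le> (norm x)\<^sup>2"
    by (rule sum_power2_l2_seq_le)
  finally show ?thesis
    using abs_le_square_iff[of "l2_seq x i" "norm x"] by simp
qed

lemma bounded_linear_l2_seq: "bounded_linear (\<lambda>x. l2_seq x i)"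
  by (rule bounded_linear_intro[of _ 1]) (use abs_l2_seq_le_norm in auto)

lemma norm_l2_finite_support:
  assumes "\<And>i. M \<le> i \<Longrightarrow> l2_seq x i = 0"
  shows "norm x = L2_set (l2_seq x) {..<M}"
  using assms unfolding norm_l2.rep_eq L2_set_def by (subst suminf_finite[of "{..<M}"]) auto

lemma Cauchy_l2_partial_sums:
  fixes X :: "nat \<Rightarrow> l2"
  assumes "Cauchy X" and z: "\<And>i. (\<lambda>n. l2_seq (X n) i) \<longlonglongrightarrow> z i" and "e > 0"
  shows "\<exists>N. \<forall>n\<ge>N. \<forall>M. (\<Sum>i<M. (l2_seq (X n) i - z i)\<^sup>2) \<le> e\<^sup>2"
proof -
  obtain N where N: "\<And>m n. m \<ge> N \<Longrightarrow> n \<ge> N \<Longrightarrow> norm (X n - X m) < e"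
    using metric_CauchyD[OF \<open>Cauchy X\<close> \<open>e > 0\<close>] by (auto simp: dist_norm)
  have "(\<Sum>i<M. (l2_seq (X n) i - z i)\<^sup>2) \<le> e\<^sup>2" if "n \<ge> N" for n M
  proof (rule LIMSEQ_le_const2)
    show "(\<lambda>m. \<Sum>i<M. (l2_seq (X n - X m) i)\<^sup>2) \<longlonglongrightarrow> (\<Sum>i<M. (l2_seq (X n) i - z i)\<^sup>2)"
      by (auto intro!: tendsto_intros z)
    show "\<exists>N'. \<forall>m\<ge>N'. (\<Sum>i<M. (l2_seq (X n - X m) i)\<^sup>2) \<le> e\<^sup>2"
      using N \<open>n \<ge> N\<close> \<open>e > 0\<close> norm_l2_le_iff[of e] less_imp_le by blast
  qed
  then show ?thesis
    by blast
qed

instance l2 :: complete_space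
proof
  fix X :: "nat \<Rightarrow> l2"
  assume "Cauchy X"
  then have "\<forall>i. convergent (\<lambda>n. l2_seq (X n) i)"
    using bounded_linear.Cauchy[OF bounded_linear_l2_seq] Cauchy_convergent_iff by blast
  then obtain z where z: "\<And>i. (\<lambda>n. l2_seq (X n) i) \<longlonglongrightarrow> z i"
    unfolding convergent_def by metis
  note partial_sums = Cauchy_l2_partial_sums[OF \<open>Cauchy X\<close> z]
  obtain N1 where "\<And>M. (\<Sum>i<M. (l2_seq (X N1) i - z i)\<^sup>2) \<le> 1"
    using partial_sums[of 1] by auto
  then have "summable (\<lambda>i. (l2_seq (X N1) i - z i)\<^sup>2)"
    by (intro summableI_nonneg_bounded) auto
  then have "summable (\<lambda>i. (l2_seq (X N1) i + - (l2_seq (X N1) i - z i))\<^sup>2)"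
    by (intro summable_sq_add summable_l2_seq) (simp add: power2_commute)
  then have "summable (\<lambda>i. (z i)\<^sup>2)"
    by simp
  then have seq_Z: "l2_seq (Abs_l2 z) = z"
    by (rule l2_seq_Abs_l2)
  have "X \<longlonglongrightarrow> Abs_l2 z"
  proof (rule metric_LIMSEQ_I)
    fix e :: real
    assume "e > 0"
    then obtain N where N: "\<And>n M. n \<ge> N \<Longrightarrow> (\<Sum>i<M. (l2_seq (X n) i - z i)\<^sup>2) \<le> (e/2)\<^sup>2"
      using partial_sums[of "e/2"] by auto
    have "norm (X n - Abs_l2 z) \<le> e/2" if "n \<ge> N" for n
    proof (subst norm_l2_le_iff)
      show "0 \<le> e/2"
        using \<open>e > 0\<close> by simp
      show "\<forall>M. (\<Sum>i<M. (l2_seq (X n - Abs_l2 z) i)\<^sup>2) \<le> (e/2)\<^sup>2"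
        using N[OF that] by (simp add: seq_Z)
    qed
    then show "\<exists>N. \<forall>n\<ge>N. dist (X n) (Abs_l2 z) < e"
      using \<open>e > 0\<close> by (force simp: dist_norm)
  qed
  then show "convergent X"
    by (auto simp: convergent_def)
qed

definition l2_trunc :: "nat \<Rightarrow> l2 \<Rightarrow> l2" where
  "l2_trunc M x = Abs_l2 (\<lambda>i. if i < M then l2_seq x i else 0)"

lemma l2_seq_trunc: "l2_seq (l2_trunc M x) i = (if i < M then l2_seq x i else 0)"
proof -
  have "summable (\<lambda>i. (if i < M then l2_seq x i else 0)\<^sup>2)"
    by (rule summable_finite[of "{..<M}"]) auto
  then show ?thesis
    by (simp add: l2_trunc_def l2_seq_Abs_l2)
qed

lemma l2_trunc_tendsto: "(\<lambda>M. l2_trunc M x) \<longlonglongrightarrow> x"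
proof -
  have "norm (x - l2_trunc M x) = sqrt (\<Sum>i. (l2_seq x (i + M))\<^sup>2)" for M
  proof -
    have "(norm (x - l2_trunc M x))\<^sup>2 = (\<Sum>i. (l2_seq (x - l2_trunc M x) (i + M))\<^sup>2)"
      using suminf_split_initial_segment[OF summable_l2_seq, of "x - l2_trunc M x" M]
      by (simp add: power2_norm_l2 l2_seq_trunc)
    then show ?thesis
      by (simp add: l2_seq_trunc real_sqrt_unique)
  qed
  moreover have "(\<lambda>M. sqrt (\<Sum>i. (l2_seq x (i + M))\<^sup>2)) \<longlonglongrightarrow> 0"
    using tendsto_real_sqrt[OF suminf_exist_split2[OF summable_l2_seq]] by simp
  ultimately have "(\<lambda>M. norm (l2_trunc M x - x)) \<longlonglongrightarrow> 0"
    by (simp add: norm_minus_commute)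
  then show ?thesis
    by (simp add: tendsto_norm_zero_iff LIM_zero_iff)
qed

definition rat_vec :: "rat list \<Rightarrow> l2" where
  "rat_vec qs = Abs_l2 (\<lambda>i. if i < length qs then real_of_rat (qs ! i) else 0)"

lemma l2_seq_rat_vec: "l2_seq (rat_vec qs) i = (if i < length qs then real_of_rat (qs ! i) else 0)"
proof -
  have "summable (\<lambda>i. (if i < length qs then real_of_rat (qs ! i) else 0)\<^sup>2)"
    by (rule summable_finite[of "{..<length qs}"]) auto
  then show ?thesis
    by (simp add: rat_vec_def l2_seq_Abs_l2)
qed

lemma rat_vec_approx_trunc:
  assumes "e > 0"
  shows "\<exists>qs. dist (rat_vec qs) (l2_trunc M x) \<le> e"
proof -
  define \<delta> where "\<delta> = e / (M + 1)"
  have "\<exists>q. \<bar>l2_seq x i - real_of_rat q\<bar> < \<delta>" for i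
  proof -
    obtain r where "r \<in> \<rat>" "l2_seq x i - \<delta> < r" "r < l2_seq x i + \<delta>"
      using Rats_dense_in_real[of "l2_seq x i - \<delta>" "l2_seq x i + \<delta>"] \<open>e > 0\<close>
      by (auto simp: \<delta>_def)
    then obtain q where "l2_seq x i - \<delta> < real_of_rat q" "real_of_rat q < l2_seq x i + \<delta>"
      by (auto elim: Rats_cases)
    then show ?thesis
      by (intro exI[of _ q]) (simp add: abs_diff_less_iff)
  qed
  then obtain Q where Q: "\<And>i. \<bar>l2_seq x i - real_of_rat (Q i)\<bar> < \<delta>"
    by metis
  define qs where "qs = map Q [0..<M]"
  have diff: "l2_seq (l2_trunc M x - rat_vec qs) i = (if i < M then l2_seq x i - real_of_rat (Q i) else 0)" for i
    by (simp add: l2_seq_trunc l2_seq_rat_vec qs_def)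
  have "dist (rat_vec qs) (l2_trunc M x) = L2_set (l2_seq (l2_trunc M x - rat_vec qs)) {..<M}"
    unfolding dist_norm norm_minus_commute[of "rat_vec qs"]
    by (rule norm_l2_finite_support) (simp add: l2_seq_trunc l2_seq_rat_vec qs_def)
  also have "\<dots> \<le> (\<Sum>i<M. \<bar>l2_seq (l2_trunc M x - rat_vec qs) i\<bar>)"
    by (rule L2_set_le_sum_abs)
  also have "\<dots> = (\<Sum>i<M. \<bar>l2_seq x i - real_of_rat (Q i)\<bar>)"
    by (intro sum.cong) (simp_all only: diff lessThan_iff if_True)
  also have "\<dots> \<le> (\<Sum>i<M. \<delta>)"
    using Q by (intro sum_mono less_imp_le)
  also have "\<dots> \<le> e"
    using \<open>e > 0\<close> by (simp add: \<delta>_def field_simps)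
  finally show ?thesis
    by blast
qed

lemma closure_range_rat_vec: "closure (range rat_vec) = UNIV"
proof -
  have "\<exists>y\<in>range rat_vec. dist y x < e" if "e > 0" for x e
  proof -
    obtain M where M: "dist (l2_trunc M x) x < e/2"
      using LIMSEQ_D[OF l2_trunc_tendsto, of "e/2" x] \<open>e > 0\<close> by (auto simp: dist_norm)
    obtain qs where "dist (rat_vec qs) (l2_trunc M x) \<le> e/2"
      using rat_vec_approx_trunc[of "e/2" M x] \<open>e > 0\<close> by auto
    then have "dist (rat_vec qs) x < e"
      using M dist_triangle[of "rat_vec qs" x "l2_trunc M x"] by linarith
    then show ?thesis
      by blast
  qed
  then show ?thesis
    by (auto simp: closure_approachable)
qed

instance l2 :: perfect_space
proof
  fix x :: l2
  define u where "u = rat_vec [1]"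
  have "u \<noteq> 0"
    using l2_seq_rat_vec[of "[1]" 0] by (auto simp: u_def)
  show "\<not> open {x}"
  proof
    assume "open {x}"
    then obtain e where "e > 0" "ball x e \<subseteq> {x}"
      using open_contains_ball by blast
    moreover have "x + (e / (2 * norm u)) *\<^sub>R u \<in> ball x e - {x}"
      using \<open>u \<noteq> 0\<close> \<open>e > 0\<close> by (simp add: dist_norm)
    ultimately show False
      by blast
  qed
qed

section \<open>Weighted backward shifts\<close>

lemma power2_mult_le_bound:
  fixes w c a :: real
  assumes "\<bar>w\<bar> \<le> c"
  shows "(w * a)\<^sup>2 \<le> c\<^sup>2 * a\<^sup>2"
proof -
  have "w\<^sup>2 \<le> c\<^sup>2"
    using assms abs_le_square_iff[of w c] by simp
  then show ?thesis
    by (simp add: power_mult_distrib mult_right_mono)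
qed

lemma summable_weighted_shift:
  assumes "\<And>i. \<bar>w i\<bar> \<le> c"
  shows "summable (\<lambda>i. (w i * l2_seq x (Suc i))\<^sup>2)"
proof (rule summable_comparison_test')
  show "summable (\<lambda>i. c\<^sup>2 * (l2_seq x (Suc i))\<^sup>2)"
    using summable_l2_seq[of x] summable_Suc_iff[where f="\<lambda>i. (l2_seq x i)\<^sup>2"]
    by (intro summable_mult) simp
  show "norm ((w i * l2_seq x (Suc i))\<^sup>2) \<le> c\<^sup>2 * (l2_seq x (Suc i))\<^sup>2" for i
    using power2_mult_le_bound[OF assms] by simp
qed

lemma l2_seq_B:
  assumes "\<And>i. \<bar>w i\<bar> \<le> c"
  shows "l2_seq (B w x) i = w i * l2_seq x (Suc i)"
  unfolding B_def using l2_seq_Abs_l2[OF summable_weighted_shift[OF assms]] by simp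

lemma norm_B_le:
  assumes "\<And>i. \<bar>w i\<bar> \<le> c"
  shows "norm (B w x) \<le> c * norm x"
proof -
  have "c \<ge> 0"
    using assms[of 0] by linarith
  have "(\<Sum>i<M. (l2_seq (B w x) i)\<^sup>2) \<le> (c * norm x)\<^sup>2" for M
  proof -
    have "(\<Sum>i<M. (l2_seq (B w x) i)\<^sup>2) \<le> (\<Sum>i<M. c\<^sup>2 * (l2_seq x (Suc i))\<^sup>2)"
      by (intro sum_mono) (simp add: l2_seq_B[OF assms] power2_mult_le_bound[OF assms])
    also have "\<dots> \<le> c\<^sup>2 * (\<Sum>i<Suc M. (l2_seq x i)\<^sup>2)"
      unfolding sum.lessThan_Suc_shift sum_distrib_left[symmetric] by (intro mult_left_mono) simp_all
    also have "\<dots> \<le> c\<^sup>2 * (norm x)\<^sup>2"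
      by (intro mult_left_mono sum_power2_l2_seq_le) simp
    finally show ?thesis
      by (simp add: power_mult_distrib)
  qed
  then show ?thesis
    using \<open>c \<ge> 0\<close> by (simp add: norm_l2_le_iff)
qed

lemma B_diff:
  assumes "\<And>i. \<bar>w i\<bar> \<le> c"
  shows "B w (x - y) = B w x - B w y"
  by (rule l2_eqI) (simp add: l2_seq_B[OF assms] algebra_simps)

lemma funpow_B_diff:
  assumes "\<And>i. \<bar>w i\<bar> \<le> c"
  shows "(B w ^^ k) (x - y) = (B w ^^ k) x - (B w ^^ k) y"
  by (induction k) (simp_all add: B_diff[OF assms])

lemma norm_funpow_B_le:
  assumes "\<And>i. \<bar>w i\<bar> \<le> c"
  shows "norm ((B w ^^ k) x) \<le> c ^ k * norm x"
proof (induction k)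
  case (Suc k)
  have "c \<ge> 0"
    using assms[of 0] by linarith
  have "norm ((B w ^^ Suc k) x) \<le> c * norm ((B w ^^ k) x)"
    using norm_B_le[OF assms] by simp
  also have "\<dots> \<le> c * (c ^ k * norm x)"
    using Suc.IH \<open>c \<ge> 0\<close> by (rule mult_left_mono)
  finally show ?case
    by simp
qed simp

lemma funpow_B_finite_support:
  assumes "\<And>i. \<bar>w i\<bar> \<le> c" and "\<And>i. M \<le> i \<Longrightarrow> l2_seq u i = 0" and "M \<le> i"
  shows "l2_seq ((B w ^^ k) u) i = 0"
  using \<open>M \<le> i\<close>
proof (induction k arbitrary: i)
  case 0
  then show ?case
    using assms(2) by simp
next
  case (Suc k)
  then show ?case
    by (simp add: l2_seq_B[OF assms(1)])
qed

lemma funpow_B_eq_on_finite_support: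
  assumes "\<And>i. \<bar>w i\<bar> \<le> c" "\<And>i. \<bar>v i\<bar> \<le> c"
    and "\<And>i. M \<le> i \<Longrightarrow> l2_seq u i = 0" and "\<And>i. i < M \<Longrightarrow> w i = v i"
  shows "(B w ^^ k) u = (B v ^^ k) u"
proof (induction k)
  case (Suc k)
  have "l2_seq (B w ((B v ^^ k) u)) i = l2_seq (B v ((B v ^^ k) u)) i" for i
  proof (cases "i < M")
    case False
    then have "l2_seq ((B v ^^ k) u) (Suc i) = 0"
      by (intro funpow_B_finite_support[of v c M u] assms) simp_all
    then show ?thesis
      by (simp add: l2_seq_B[OF assms(1)] l2_seq_B[OF assms(2)])
  qed (simp add: l2_seq_B[OF assms(1)] l2_seq_B[OF assms(2)] assms(4))
  then have "B w ((B v ^^ k) u) = B v ((B v ^^ k) u)"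
    by (rule l2_eqI)
  then show ?case
    using Suc.IH by simp
qed simp

lemma dist_funpow_B_le:
  assumes w: "\<And>i. \<bar>w i\<bar> \<le> c" and v: "\<And>i. \<bar>v i\<bar> \<le> c" and "(B w ^^ k) u = (B v ^^ k) u"
  shows "dist ((B w ^^ k) x) ((B v ^^ k) x0) \<le> c ^ k * (dist x x0 + 2 * norm (x0 - u))"
proof -
  have "dist ((B w ^^ k) x) ((B v ^^ k) x0)
      = norm ((B w ^^ k) (x - x0) + (B w ^^ k) (x0 - u) - (B v ^^ k) (x0 - u))"
    using assms(3) by (simp add: dist_norm funpow_B_diff[OF w] funpow_B_diff[OF v])
  also have "\<dots> \<le> norm ((B w ^^ k) (x - x0)) + norm ((B w ^^ k) (x0 - u)) + norm ((B v ^^ k) (x0 - u))"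
    using norm_triangle_ineq4[of "(B w ^^ k) (x - x0) + (B w ^^ k) (x0 - u)" "(B v ^^ k) (x0 - u)"]
      norm_triangle_ineq[of "(B w ^^ k) (x - x0)" "(B w ^^ k) (x0 - u)"]
    by linarith
  also have "\<dots> \<le> c ^ k * norm (x - x0) + c ^ k * norm (x0 - u) + c ^ k * norm (x0 - u)"
    by (intro add_mono norm_funpow_B_le w v)
  also have "\<dots> = c ^ k * (dist x x0 + 2 * norm (x0 - u))"
    by (simp add: dist_norm algebra_simps)
  finally show ?thesis .
qed

lemma funpow_B_approx:
  assumes "\<And>i. \<bar>v i\<bar> \<le> c" and "e > 0"
  shows "\<exists>\<delta>>0. \<exists>M. \<forall>w x. (\<forall>i. \<bar>w i\<bar> \<le> c) \<longrightarrow> (\<forall>i<M. w i = v i) \<longrightarrow> dist x x0 < \<delta>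
           \<longrightarrow> dist ((B w ^^ k) x) ((B v ^^ k) x0) < e"
proof -
  define \<eta> where "\<eta> = e / (3 * (c ^ k + 1))"
  have "c ^ k \<ge> 0"
    using assms(1)[of 0] by simp
  then have "\<eta> > 0"
    using \<open>e > 0\<close> by (simp add: \<eta>_def)
  have "c ^ k * (3 * \<eta>) = e * (c ^ k / (c ^ k + 1))"
    using \<open>c ^ k \<ge> 0\<close> by (simp add: \<eta>_def field_simps)
  also have "\<dots> < e"
    using \<open>c ^ k \<ge> 0\<close> \<open>e > 0\<close> by (simp add: field_simps)
  finally have small: "c ^ k * (3 * \<eta>) < e" .
  obtain M where M: "norm (x0 - l2_trunc M x0) < \<eta>"
    using LIMSEQ_D[OF l2_trunc_tendsto \<open>\<eta> > 0\<close>] by (auto simp: norm_minus_commute)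
  txt \<open>Split \<open>x0\<close> into a finitely supported part \<open>u\<close>, whose images under \<open>B w ^^ k\<close>
    only involve the weights below \<open>M\<close>, and a tail of norm less than \<open>\<eta>\<close>.\<close>
  define u where "u = l2_trunc M x0"
  have "dist ((B w ^^ k) x) ((B v ^^ k) x0) < e"
    if w: "\<And>i. \<bar>w i\<bar> \<le> c" and agree: "\<forall>i<M. w i = v i" and x: "dist x x0 < \<eta>" for w x
  proof -
    have "(B w ^^ k) u = (B v ^^ k) u"
      using agree by (intro funpow_B_eq_on_finite_support[OF w assms(1), of M]) (auto simp: u_def l2_seq_trunc)
    then have "dist ((B w ^^ k) x) ((B v ^^ k) x0) \<le> c ^ k * (dist x x0 + 2 * norm (x0 - u))"
      by (rule dist_funpow_B_le[OF w assms(1)])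
    also have "\<dots> \<le> c ^ k * (3 * \<eta>)"
      using x M \<open>c ^ k \<ge> 0\<close> by (intro mult_left_mono) (simp_all add: u_def)
    finally show ?thesis
      using small by linarith
  qed
  then show ?thesis
    using \<open>\<eta> > 0\<close> by blast
qed

section \<open>Hypercyclic vectors\<close>

lemma HC_iff: "x \<in> HC w \<longleftrightarrow> (\<forall>U. open U \<longrightarrow> U \<noteq> {} \<longrightarrow> (\<exists>k. (B w ^^ k) x \<in> U))"
  unfolding HC_def closure_eq_UNIV_iff by blast

lemma HC_funpow:
  assumes "h \<in> HC w"
  shows "(B w ^^ k) h \<in> HC w"
  unfolding HC_iff
proof (intro allI impI)
  fix U :: "l2 set"
  assume "open U" "U \<noteq> {}"
  let ?F = "(\<lambda>j. (B w ^^ j) h) ` {..<k}"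
  have "open (U - ?F)"
    using \<open>open U\<close> by (intro open_Diff finite_imp_closed) auto
  moreover have "U - ?F \<noteq> {}"
    using open_nonempty_infinite[OF \<open>open U\<close> \<open>U \<noteq> {}\<close>] finite_subset[of U ?F] by auto
  ultimately obtain j where "(B w ^^ j) h \<in> U - ?F"
    using assms HC_iff by blast
  moreover from this have "k \<le> j"
    by (auto simp: not_le)
  ultimately have "(B w ^^ (j - k)) ((B w ^^ k) h) \<in> U"
    by (simp flip: funpow_add[unfolded comp_def, THEN fun_cong])
  then show "\<exists>i. (B w ^^ i) ((B w ^^ k) h) \<in> U"
    by blast
qed

lemma HC_meets_open:
  assumes "HC w \<noteq> {}" "open U" "U \<noteq> {}"
  shows "U \<inter> HC w \<noteq> {}"
  using assms HC_iff HC_funpow by blast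

lemma HC_if_enters_ball_seq:
  fixes d :: "'i::countable \<Rightarrow> l2"
  assumes "closure (range d) = UNIV" and "\<And>n. N \<le> n \<Longrightarrow> \<exists>k. (B w ^^ k) x \<in> ball_seq d n"
  shows "x \<in> HC w"
  unfolding HC_iff
proof (intro allI impI)
  fix U :: "l2 set"
  assume "open U" "U \<noteq> {}"
  then obtain n where "N \<le> n" "ball_seq d n \<subseteq> U"
    using ball_seq_subset[OF assms(1)] by blast
  then show "\<exists>k. (B w ^^ k) x \<in> U"
    using assms(2) by blast
qed

section \<open>Building the perfect set\<close>

locale weight_selection =
  fixes G :: "l2 set" and f :: "l2 \<Rightarrow> nat \<Rightarrow> real"
  assumes dense_G: "closure G = UNIV"
    and weights: "\<And>y i. y \<in> G \<Longrightarrow> f y i \<in> {1, 2}"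
    and continuous_f: "continuous_on G f"
    and HC_nonempty: "\<And>y. y \<in> G \<Longrightarrow> HC (f y) \<noteq> {}"
begin

lemma abs_weight_le: "y \<in> G \<Longrightarrow> \<bar>f y i\<bar> \<le> 2"
  using weights[of y i] by auto

lemma weights_Ints: "y \<in> G \<Longrightarrow> f y i \<in> \<int>"
  using weights[of y i] by auto

lemma open_meets_G: "open U \<Longrightarrow> U \<noteq> {} \<Longrightarrow> U \<inter> G \<noteq> {}"
  using dense_G closure_eq_UNIV_iff by blast

definition orbits_enter :: "l2 set \<Rightarrow> l2 set \<Rightarrow> l2 set \<Rightarrow> bool" where
  "orbits_enter A C T \<longleftrightarrow> (\<forall>x\<in>A. \<forall>y\<in>C \<inter> G. \<exists>k. (B (f y) ^^ k) x \<in> T)"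

lemma orbits_enterD: "orbits_enter A C T \<Longrightarrow> x \<in> A \<Longrightarrow> y \<in> C \<Longrightarrow> y \<in> G \<Longrightarrow> \<exists>k. (B (f y) ^^ k) x \<in> T"
  unfolding orbits_enter_def by blast

lemma orbits_enter_mono: "orbits_enter A C T \<Longrightarrow> A' \<subseteq> A \<Longrightarrow> C' \<subseteq> C \<Longrightarrow> orbits_enter A' C' T"
  unfolding orbits_enter_def by blast

lemma orbits_enter_refine:
  assumes "open U" "U \<noteq> {}" "open V" "V \<noteq> {}" "open T" "T \<noteq> {}"
  shows "\<exists>U'\<subseteq>U. \<exists>V'\<subseteq>V. open U' \<and> U' \<noteq> {} \<and> open V' \<and> V' \<noteq> {} \<and> orbits_enter U' V' T"
proof -
  obtain y0 where "y0 \<in> V" "y0 \<in> G"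
    using open_meets_G[OF assms(3,4)] by blast
  obtain x0 where "x0 \<in> U" "x0 \<in> HC (f y0)"
    using HC_meets_open[OF HC_nonempty[OF \<open>y0 \<in> G\<close>] assms(1,2)] by blast
  then obtain k where "(B (f y0) ^^ k) x0 \<in> T"
    using HC_iff assms(5,6) by blast
  then obtain \<epsilon> where "\<epsilon> > 0" and \<epsilon>: "ball ((B (f y0) ^^ k) x0) \<epsilon> \<subseteq> T"
    using \<open>open T\<close> open_contains_ball by blast
  obtain \<delta> M where "\<delta> > 0"
    and near: "\<And>w x. \<forall>i. \<bar>w i\<bar> \<le> 2 \<Longrightarrow> \<forall>i<M. w i = f y0 i \<Longrightarrow> dist x x0 < \<delta>
      \<Longrightarrow> dist ((B w ^^ k) x) ((B (f y0) ^^ k) x0) < \<epsilon>"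
    using funpow_B_approx[of "f y0" 2 \<epsilon> x0 k] abs_weight_le[OF \<open>y0 \<in> G\<close>] \<open>\<epsilon> > 0\<close> by blast
  obtain \<delta>' where "\<delta>' > 0" and agree: "\<And>y. y \<in> G \<Longrightarrow> dist y y0 < \<delta>' \<Longrightarrow> \<forall>i<M. f y i = f y0 i"
    using continuous_on_Ints_locally_constant[OF continuous_f weights_Ints \<open>y0 \<in> G\<close>, of M] by blast
  have "orbits_enter (U \<inter> ball x0 \<delta>) (V \<inter> ball y0 \<delta>') T"
    unfolding orbits_enter_def
  proof (intro ballI)
    fix x y
    assume "x \<in> U \<inter> ball x0 \<delta>" "y \<in> V \<inter> ball y0 \<delta>' \<inter> G"
    then have "(B (f y) ^^ k) x \<in> ball ((B (f y0) ^^ k) x0) \<epsilon>"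
      using near[of "f y" x] agree[of y] abs_weight_le[of y] by (auto simp: dist_commute)
    then show "\<exists>k. (B (f y) ^^ k) x \<in> T"
      using \<epsilon> by blast
  qed
  then show ?thesis
    using assms \<open>x0 \<in> U\<close> \<open>y0 \<in> V\<close> \<open>\<delta> > 0\<close> \<open>\<delta>' > 0\<close>
    by (intro exI[of _ "U \<inter> ball x0 \<delta>"] conjI exI[of _ "V \<inter> ball y0 \<delta>'"]) auto
qed

lemma open_family_refinement:
  assumes "finite I" and U: "\<And>i. i \<in> I \<Longrightarrow> open (U i) \<and> U i \<noteq> {}" and "open T" "T \<noteq> {}"
  shows "\<exists>V. \<forall>i\<in>I. (open (V i) \<and> V i \<noteq> {}) \<and> V i \<subseteq> U i
           \<and> (\<forall>j\<in>I. i \<noteq> j \<longrightarrow> V i \<inter> V j = {} \<and> orbits_enter (V i) (V j) T)"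
proof (rule pairwise_refinement[OF \<open>finite I\<close>])
  show "A' \<inter> B' = {} \<and> orbits_enter A' B' T"
    if "A \<inter> B = {} \<and> orbits_enter A B T" "A' \<subseteq> A" "B' \<subseteq> B" for A B A' B'
    using that orbits_enter_mono by blast
  show "\<exists>A'\<subseteq>A. \<exists>B'\<subseteq>B. (open A' \<and> A' \<noteq> {}) \<and> (open B' \<and> B' \<noteq> {}) \<and> A' \<inter> B' = {} \<and> orbits_enter A' B' T"
    if A: "open A \<and> A \<noteq> {}" and B: "open B \<and> B \<noteq> {}" for A B
  proof -
    obtain A1 B1 where "A1 \<subseteq> A" "B1 \<subseteq> B" "open A1" "A1 \<noteq> {}" "open B1" "B1 \<noteq> {}" "A1 \<inter> B1 = {}"
      using disjoint_open_subsets[of A B] A B by blast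
    then obtain A2 B2 where "A2 \<subseteq> A1" "B2 \<subseteq> B1" "open A2" "A2 \<noteq> {}" "open B2" "B2 \<noteq> {}"
      and "orbits_enter A2 B2 T"
      using orbits_enter_refine[of A1 B1 T] \<open>open T\<close> \<open>T \<noteq> {}\<close> by blast
    then show ?thesis
      using \<open>A1 \<subseteq> A\<close> \<open>B1 \<subseteq> B\<close> \<open>A1 \<inter> B1 = {}\<close> by (intro exI[of _ A2] conjI exI[of _ B2]) auto
  qed
qed (use U in blast)

definition scheme_level :: "nat \<Rightarrow> (bool list \<Rightarrow> l2 set) \<Rightarrow> bool" where
  "scheme_level n L \<longleftrightarrow> (\<forall>s. length s = n \<longrightarrow> (\<exists>c r. 0 < r \<and> r \<le> (1/2) ^ n \<and> L s = cball c r)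
     \<and> (\<forall>t. length t = n \<longrightarrow> s \<noteq> t \<longrightarrow> L s \<inter> L t = {} \<and> orbits_enter (L s) (L t) (ball_seq rat_vec n)))"

lemma scheme_level_cball:
  "scheme_level n L \<Longrightarrow> length s = n \<Longrightarrow> \<exists>c r. 0 < r \<and> r \<le> (1/2) ^ n \<and> L s = cball c r"
  unfolding scheme_level_def by blast

lemma scheme_level_pair:
  "scheme_level n L \<Longrightarrow> length s = n \<Longrightarrow> length t = n \<Longrightarrow> s \<noteq> t
    \<Longrightarrow> L s \<inter> L t = {} \<and> orbits_enter (L s) (L t) (ball_seq rat_vec n)"
  unfolding scheme_level_def by blast

lemma scheme_level_inside:
  assumes "\<And>s. length s = n \<Longrightarrow> open (U s) \<and> U s \<noteq> {}"
  shows "\<exists>L. scheme_level n L \<and> (\<forall>s. length s = n \<longrightarrow> L s \<subseteq> U s)"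
proof -
  let ?T = "ball_seq rat_vec n"
  have "finite {s :: bool list. length s = n}"
    using finite_lists_length_eq[of "UNIV :: bool set" n] by simp
  then have "\<exists>V. \<forall>s\<in>{s. length s = n}. (open (V s) \<and> V s \<noteq> {}) \<and> V s \<subseteq> U s
      \<and> (\<forall>t\<in>{s. length s = n}. s \<noteq> t \<longrightarrow> V s \<inter> V t = {} \<and> orbits_enter (V s) (V t) ?T)"
    by (rule open_family_refinement) (simp_all add: assms open_ball_seq ball_seq_nonempty)
  then obtain V where V: "\<forall>s\<in>{s. length s = n}. (open (V s) \<and> V s \<noteq> {}) \<and> V s \<subseteq> U s
      \<and> (\<forall>t\<in>{s. length s = n}. s \<noteq> t \<longrightarrow> V s \<inter> V t = {} \<and> orbits_enter (V s) (V t) ?T)" ..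
  have "\<exists>c r. 0 < r \<and> r \<le> (1/2) ^ n \<and> cball c r \<subseteq> V s" if "length s = n" for s
    using V that by (intro open_contains_small_cball) auto
  then obtain c r where cr: "\<And>s. length s = n \<Longrightarrow> 0 < r s \<and> r s \<le> (1/2) ^ n \<and> cball (c s) (r s) \<subseteq> V s"
    by metis
  have "scheme_level n (\<lambda>s. cball (c s) (r s))"
    unfolding scheme_level_def
  proof (intro allI impI conjI)
    fix s t :: "bool list"
    assume s: "length s = n"
    then show "\<exists>c' r'. 0 < r' \<and> r' \<le> (1/2) ^ n \<and> cball (c s) (r s) = cball c' r'"
      using cr by blast
    assume t: "length t = n" and "s \<noteq> t"
    then have "V s \<inter> V t = {}" and "orbits_enter (V s) (V t) ?T"
      using V s by auto
    then show "cball (c s) (r s) \<inter> cball (c t) (r t) = {}"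
      and "orbits_enter (cball (c s) (r s)) (cball (c t) (r t)) ?T"
      using cr[OF s] cr[OF t] orbits_enter_mono by blast+
  qed
  moreover have "cball (c s) (r s) \<subseteq> U s" if "length s = n" for s
    using cr[OF that] V that by auto
  ultimately show ?thesis
    by blast
qed

lemma scheme_level_Suc:
  assumes "scheme_level n L" and "open S" and "G \<subseteq> S"
  shows "\<exists>L'. scheme_level (Suc n) L' \<and> (\<forall>t. length t = Suc n \<longrightarrow> L' t \<subseteq> S)
           \<and> (\<forall>s b. length s = n \<longrightarrow> L' (s @ [b]) \<subseteq> L s)"
proof -
  define U where "U t = interior (L (butlast t)) \<inter> S" for t
  have "open (U t) \<and> U t \<noteq> {}" if "length t = Suc n" for t
  proof -
    have "length (butlast t) = n"
      using that by simp
    then obtain c r where "r > 0" "L (butlast t) = cball c r"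
      using scheme_level_cball[OF assms(1)] by blast
    then have "interior (L (butlast t)) \<inter> G \<noteq> {}"
      using open_meets_G[of "ball c r"] by simp
    then show ?thesis
      using assms(2,3) by (auto simp: U_def)
  qed
  then obtain L' where "scheme_level (Suc n) L'" and L': "\<And>t. length t = Suc n \<Longrightarrow> L' t \<subseteq> U t"
    using scheme_level_inside by blast
  moreover have "L' (s @ [b]) \<subseteq> L s" if "length s = n" for s b
    using L'[of "s @ [b]"] that interior_subset[of "L s"] by (auto simp: U_def)
  moreover have "L' t \<subseteq> S" if "length t = Suc n" for t
    using L'[OF that] by (auto simp: U_def)
  ultimately show ?thesis
    by blast
qed

lemma cantor_scheme_of_levels:
  assumes "\<And>n. scheme_level n (Ls n)" and "\<And>s b. Ls (Suc (length s)) (s @ [b]) \<subseteq> Ls (length s) s"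
  shows "cantor_scheme (\<lambda>s. Ls (length s) s) (\<lambda>n. 2 * (1/2) ^ n)"
proof
  fix s :: "bool list"
  obtain c r where cr: "0 < r" "r \<le> (1/2) ^ length s" "Ls (length s) s = cball c r"
    using scheme_level_cball[OF assms(1)[of "length s"], of s] by blast
  then show "closed (Ls (length s) s)" and "Ls (length s) s \<noteq> {}"
    by auto
  show "dist x y \<le> 2 * (1/2) ^ length s" if "x \<in> Ls (length s) s" "y \<in> Ls (length s) s" for x y
    using that cr dist_triangle3[of x y c] by simp
  show "Ls (length (s @ [b])) (s @ [b]) \<subseteq> Ls (length s) s" for b
    using assms(2) by simp
  show "Ls (length (s @ [True])) (s @ [True]) \<inter> Ls (length (s @ [False])) (s @ [False]) = {}"
    using scheme_level_pair[OF assms(1)[of "Suc (length s)"], of "s @ [True]" "s @ [False]"] by simp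
  show "(\<lambda>n. 2 * (1/2) ^ n :: real) \<longlonglongrightarrow> 0"
    by (intro tendsto_mult_right_zero LIMSEQ_power_zero) simp
qed

lemma scheme_levels_exist:
  assumes Op: "\<And>n. open (Op n)" "\<And>n. G \<subseteq> Op n"
  obtains Ls where "\<And>n. scheme_level n (Ls n)" and "\<And>s. Ls (length s) s \<subseteq> Op (length s)"
    and "\<And>s b. Ls (Suc (length s)) (s @ [b]) \<subseteq> Ls (length s) s"
proof -
  have "G \<noteq> {}"
    using open_meets_G[of UNIV] by simp
  then have "open (Op 0) \<and> Op 0 \<noteq> {}"
    using Op by blast
  then have "\<exists>L. scheme_level 0 L \<and> (\<forall>s. length s = 0 \<longrightarrow> L s \<subseteq> Op 0)"
    by (intro scheme_level_inside)
  moreover have "\<exists>L'. (scheme_level (Suc n) L' \<and> (\<forall>s. length s = Suc n \<longrightarrow> L' s \<subseteq> Op (Suc n)))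
      \<and> (\<forall>s b. length s = n \<longrightarrow> L' (s @ [b]) \<subseteq> L s)"
    if L: "scheme_level n L \<and> (\<forall>s. length s = n \<longrightarrow> L s \<subseteq> Op n)" for n L
  proof -
    obtain L' where "scheme_level (Suc n) L'" "\<forall>t. length t = Suc n \<longrightarrow> L' t \<subseteq> Op (Suc n)"
      "\<forall>s b. length s = n \<longrightarrow> L' (s @ [b]) \<subseteq> L s"
      using scheme_level_Suc[OF conjunct1[OF L] Op(1)[of "Suc n"] Op(2)[of "Suc n"]] by (elim exE conjE)
    then show ?thesis
      by blast
  qed
  ultimately have "\<exists>Ls. \<forall>n. (scheme_level n (Ls n) \<and> (\<forall>s. length s = n \<longrightarrow> Ls n s \<subseteq> Op n))
      \<and> (\<forall>s b. length s = n \<longrightarrow> Ls (Suc n) (s @ [b]) \<subseteq> Ls n s)"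
    by (rule dependent_nat_choice)
  then obtain Ls where Ls: "\<forall>n. (scheme_level n (Ls n) \<and> (\<forall>s. length s = n \<longrightarrow> Ls n s \<subseteq> Op n))
      \<and> (\<forall>s b. length s = n \<longrightarrow> Ls (Suc n) (s @ [b]) \<subseteq> Ls n s)" ..
  show thesis
  proof (rule that)
    show "scheme_level n (Ls n)" for n
      using Ls by blast
    show "Ls (length s) s \<subseteq> Op (length s)" for s
      using Ls by blast
    show "Ls (Suc (length s)) (s @ [b]) \<subseteq> Ls (length s) s" for s b
      using Ls by blast
  qed
qed

lemma limit_set_mutually_hypercyclic:
  assumes Ls: "\<And>n. scheme_level n (Ls n)" and Ls_Suc: "\<And>s b. Ls (Suc (length s)) (s @ [b]) \<subseteq> Ls (length s) s"
    and x: "x \<in> cantor_scheme.limit_set (\<lambda>s. Ls (length s) s)"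
    and y: "y \<in> cantor_scheme.limit_set (\<lambda>s. Ls (length s) s)" and "y \<in> G" and "x \<noteq> y"
  shows "x \<in> HC (f y)"
proof -
  interpret cantor_scheme "\<lambda>s. Ls (length s) s" "\<lambda>n. 2 * (1/2) ^ n"
    using Ls Ls_Suc by (rule cantor_scheme_of_levels)
  obtain N where N: "\<And>s. N \<le> length s \<Longrightarrow> x \<in> Ls (length s) s \<Longrightarrow> y \<notin> Ls (length s) s"
    using distinct_points_separated[OF \<open>x \<noteq> y\<close>] by blast
  have "\<exists>k. (B (f y) ^^ k) x \<in> ball_seq rat_vec n" if "N \<le> n" for n
  proof -
    obtain s where s: "length s = n" "x \<in> Ls n s"
      using limit_setD[OF x, of n] by auto
    obtain t where t: "length t = n" "y \<in> Ls n t"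
      using limit_setD[OF y, of n] by auto
    have "s \<noteq> t"
      using N[of s] s t \<open>N \<le> n\<close> by auto
    then have "orbits_enter (Ls n s) (Ls n t) (ball_seq rat_vec n)"
      using scheme_level_pair[OF Ls s(1) t(1)] by blast
    then show ?thesis
      using orbits_enterD s(2) t(2) \<open>y \<in> G\<close> by blast
  qed
  then show ?thesis
    by (rule HC_if_enters_ball_seq[OF closure_range_rat_vec])
qed

theorem mutually_hypercyclic_perfect_set:
  assumes "gdelta_in euclidean G"
  shows "\<exists>P. P \<noteq> {} \<and> perfect_set P \<and> P \<subseteq> G \<and> (\<forall>x\<in>P. \<forall>y\<in>P. x \<noteq> y \<longrightarrow> x \<in> HC (f y))"
proof -
  obtain Op where Op: "(\<forall>n. openin euclidean (Op n)) \<and> (\<forall>n. Op (Suc n) \<subseteq> Op n) \<and> \<Inter>(range Op) = G"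
    using assms unfolding gdelta_in_descending ..
  then have G_eq: "G = \<Inter>(range Op)"
    by (elim conjE) simp
  have Op_open: "open (Op n)" and G_sub: "G \<subseteq> Op n" for n
    using Op unfolding G_eq by auto
  obtain Ls where Ls: "\<And>n. scheme_level n (Ls n)" and Ls_Op: "\<And>s. Ls (length s) s \<subseteq> Op (length s)"
    and Ls_Suc: "\<And>s b. Ls (Suc (length s)) (s @ [b]) \<subseteq> Ls (length s) s"
    using scheme_levels_exist[of Op, OF Op_open G_sub] by blast
  interpret cantor_scheme "\<lambda>s. Ls (length s) s" "\<lambda>n. 2 * (1/2) ^ n"
    using Ls Ls_Suc by (rule cantor_scheme_of_levels)
  have "limit_set \<subseteq> G"
  proof
    fix x
    assume x: "x \<in> limit_set"
    have "x \<in> Op n" for n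
    proof -
      obtain s where "length s = n" "x \<in> Ls (length s) s"
        using limit_setD[OF x] by blast
      then show ?thesis
        using Ls_Op[of s] by auto
    qed
    then show "x \<in> G"
      unfolding G_eq by blast
  qed
  moreover have "limit_set \<noteq> {}"
    using limit_set_meets[of "[]"] by blast
  moreover have "\<forall>x\<in>limit_set. \<forall>y\<in>limit_set. x \<noteq> y \<longrightarrow> x \<in> HC (f y)"
    using limit_set_mutually_hypercyclic[OF Ls Ls_Suc] \<open>limit_set \<subseteq> G\<close> by blast
  ultimately show ?thesis
    using perfect_limit_set by (intro exI[of _ limit_set]) simp
qed

end

theorem lemma6:
  fixes G :: "l2 set" and f :: "l2 \<Rightarrow> (nat \<Rightarrow> real)"
  assumes "gdelta_in euclidean G"
    and "closure G = UNIV"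
    and "f ` G \<subseteq> {w. \<forall>i. w i \<in> {1, 2}}"
    and "continuous_on G f"
    and "\<And>y. y \<in> G \<Longrightarrow> y \<notin> HC (f y)"
    and "\<And>y. y \<in> G \<Longrightarrow> HC (f y) \<noteq> {}"
    and "\<And>U. open U \<Longrightarrow> U \<noteq> {} \<Longrightarrow> \<exists>a b. a \<in> f ` (U \<inter> G) \<and> b \<in> f ` (U \<inter> G) \<and> a \<noteq> b"
  shows "\<exists>P. P \<noteq> {} \<and> perfect_set P \<and> P \<subseteq> G
           \<and> (\<forall>x\<in>P. x \<notin> HC (f x))
           \<and> (\<forall>x\<in>P. \<forall>y\<in>P. x \<noteq> y \<longrightarrow> x \<in> HC (f y))"
proof -
  interpret weight_selection G f
  proof
    show "closure G = UNIV"
      by (rule assms(2))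
    show "f y i \<in> {1, 2}" if "y \<in> G" for y i
      using assms(3) that by (auto simp: image_subset_iff)
    show "continuous_on G f"
      by (rule assms(4))
    show "HC (f y) \<noteq> {}" if "y \<in> G" for y
      using assms(6) that .
  qed
  obtain P where "P \<noteq> {}" "perfect_set P" "P \<subseteq> G" "\<forall>x\<in>P. \<forall>y\<in>P. x \<noteq> y \<longrightarrow> x \<in> HC (f y)"
    using mutually_hypercyclic_perfect_set[OF assms(1)] by (elim exE conjE)
  moreover have "\<forall>x\<in>P. x \<notin> HC (f x)"
    using \<open>P \<subseteq> G\<close> assms(5) by auto
  ultimately show ?thesis
    by (intro exI[of _ P]) simp
qed

end
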